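(* Let $\mathcal S$ be a Garside family in a cancellative category $\mathcal C$. The following are equivalent: (i) For all $f,g\in\mathcal C$ that admit a common right-multiple, there exist $\mathcal S$-normal paths $u,v$ such that the negative–positive path $\overline u\,|\,v$ is symmetric $\mathcal S$-normal and $(f,g)\bowtie([u],[v])$; (ii) $\mathcal C$ admits conditional weak left-lcms.
   Context: A category is cancellative if $fg=fg'\Rightarrow g=g'$ and $gf=g'f\Rightarrow g=g'$. $\mathcal C^\times$ is the family of invertible elements; for $\mathcal S\subseteq\mathcal C$, $\mathcal S^\sharp=\mathcal S\mathcal C^\times\cup\mathcal C^\times$. $f\preccurlyeq g$ means $g=fg'$ for some $g'$. A length-two path $(g_1,g_2)$ is $\mathcal S$-greedy if for all $s\in\mathcal S$ and $f\in\mathcal C$ with $fg_1$ defined, $s\preccurlyeq fg_1g_2$ implies $s\preccurlyeq fg_1$; a path is $\mathcal S$-greedy if all its length-two subpaths are. A path is $\mathcal S$-normal if it is $\mathcal S$-greedy and all its entries lie in $\mathcal S^\sharp$. For a path $u=(s_1,\dots,s_p)$, $[u]$ denotes the product $s_1\cdots s_p$ (an identity-element for an empty path). $\mathcal S$ is a Garside family in $\mathcal C$ if every element of $\mathcal C$ is $[u]$ for some $\mathcal S$-normal path $u$. Two elements $f,g$ with the same source are left-disjoint if whenever $h\preccurlyeq h'f$ and $h\preccurlyeq h'g$, then $h\preccurlyeq h'$. For $\mathcal S$-normal paths $u,v$ with the same source, the path $\overline u\,|\,v$ is symmetric $\mathcal S$-normal if, in case $u$ and $v$ are both nonempty, their first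 entries are left-disjoint. For pairs of elements with common source, $(f,g)\bowtie(f',g')$ means there exist $h,h'$ with $hf=h'f'$ and $hg=h'g'$. An element $h$ is a weak left-lcm of $f,g$ (same target) if $h$ is a common left-multiple of $f$ and $g$ and every common left-multiple of $f$ and $g$ that admits a common left-multiple with $h$ is a left-multiple of $h$. $\mathcal C$ admits conditional weak left-lcms if, whenever $f,g$ admit a common left-multiple $h_0$, they admit a weak left-lcm $h$ such that $h_0$ is a left-multiple of $h$. *)

theory Defs
  imports Main
begin

text \<open>Composition is written
left-to-right as in the paper: comp C f g is "f g", defined when tgt f = src g.\<close>

record ('o, 'm) cat =
  obj  :: "'o set"
  mor  :: "'m set"
  src  :: "'m \<Rightarrow> 'o"
  tgt  :: "'m \<Rightarrow> 'o"
  comp :: "'m \<Rightarrow> 'm \<Rightarrow> 'm"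
  idm  :: "'o \<Rightarrow> 'm"

definition category :: "('o, 'm) cat \<Rightarrow> bool" where
  "category C \<longleftrightarrow>
     (\<forall>f\<in>mor C. src C f \<in> obj C \<and> tgt C f \<in> obj C) \<and>
     (\<forall>x\<in>obj C. idm C x \<in> mor C \<and> src C (idm C x) = x \<and> tgt C (idm C x) = x) \<and>
     (\<forall>f\<in>mor C. \<forall>g\<in>mor C. tgt C f = src C g \<longrightarrow>
        comp C f g \<in> mor C \<and> src C (comp C f g) = src C f \<and> tgt C (comp C f g) = tgt C g) \<and>
     (\<forall>f\<in>mor C. \<forall>g\<in>mor C. \<forall>h\<in>mor C. tgt C f = src C g \<longrightarrow> tgt C g = src C h \<longrightarrow>
        comp C (comp C f g) h = comp C f (comp C g h)) \<and>
     (\<forall>f\<in>mor C. comp C (idm C (src C f)) f = f \<and> comp C f (idm C (tgt C f)) = f)"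

definition cancellative :: "('o, 'm) cat \<Rightarrow> bool" where
  "cancellative C \<longleftrightarrow>
     (\<forall>f\<in>mor C. \<forall>g\<in>mor C. \<forall>g'\<in>mor C.
        tgt C f = src C g \<longrightarrow> tgt C f = src C g' \<longrightarrow> comp C f g = comp C f g' \<longrightarrow> g = g') \<and>
     (\<forall>f\<in>mor C. \<forall>g\<in>mor C. \<forall>g'\<in>mor C.
        tgt C g = src C f \<longrightarrow> tgt C g' = src C f \<longrightarrow> comp C g f = comp C g' f \<longrightarrow> g = g')"

definition invertibles :: "('o, 'm) cat \<Rightarrow> 'm set" where
  "invertibles C = {f \<in> mor C. \<exists>g\<in>mor C. src C g = tgt C f \<and> tgt C g = src C f \<and>
      comp C f g = idm C (src C f) \<and> comp C g f = idm C (tgt C f)}"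

definition sharp :: "('o, 'm) cat \<Rightarrow> 'm set \<Rightarrow> 'm set" where
  "sharp C S = {comp C s e | s e. s \<in> S \<and> e \<in> invertibles C \<and> tgt C s = src C e}
                \<union> invertibles C"

definition left_div :: "('o, 'm) cat \<Rightarrow> 'm \<Rightarrow> 'm \<Rightarrow> bool" where
  "left_div C f g \<longleftrightarrow> f \<in> mor C \<and> (\<exists>g'\<in>mor C. src C g' = tgt C f \<and> g = comp C f g')"

definition left_mult :: "('o, 'm) cat \<Rightarrow> 'm \<Rightarrow> 'm \<Rightarrow> bool" where
  "left_mult C h f \<longleftrightarrow> f \<in> mor C \<and> (\<exists>k\<in>mor C. tgt C k = src C f \<and> h = comp C k f)"

fun is_path :: "('o, 'm) cat \<Rightarrow> 'o \<Rightarrow> 'm list \<Rightarrow> bool" where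
  "is_path C x [] \<longleftrightarrow> x \<in> obj C"
| "is_path C x (s # u) \<longleftrightarrow> s \<in> mor C \<and> src C s = x \<and> is_path C (tgt C s) u"

fun path_prod :: "('o, 'm) cat \<Rightarrow> 'o \<Rightarrow> 'm list \<Rightarrow> 'm" where
  "path_prod C x [] = idm C x"
| "path_prod C x (s # u) = comp C s (path_prod C (tgt C s) u)"

definition greedy2 :: "('o, 'm) cat \<Rightarrow> 'm set \<Rightarrow> 'm \<Rightarrow> 'm \<Rightarrow> bool" where
  "greedy2 C S g1 g2 \<longleftrightarrow>
     (\<forall>s\<in>S. \<forall>f\<in>mor C. tgt C f = src C g1 \<longrightarrow>
        left_div C s (comp C (comp C f g1) g2) \<longrightarrow> left_div C s (comp C f g1))"

definition greedy_path :: "('o, 'm) cat \<Rightarrow> 'm set \<Rightarrow> 'm list \<Rightarrow> bool" where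
  "greedy_path C S u \<longleftrightarrow> (\<forall>i. Suc i < length u \<longrightarrow> greedy2 C S (u ! i) (u ! Suc i))"

definition normal_path :: "('o, 'm) cat \<Rightarrow> 'm set \<Rightarrow> 'm list \<Rightarrow> bool" where
  "normal_path C S u \<longleftrightarrow> greedy_path C S u \<and> set u \<subseteq> sharp C S"

definition garside_family :: "('o, 'm) cat \<Rightarrow> 'm set \<Rightarrow> bool" where
  "garside_family C S \<longleftrightarrow> S \<subseteq> mor C \<and>
     (\<forall>g\<in>mor C. \<exists>u. is_path C (src C g) u \<and> normal_path C S u \<and> path_prod C (src C g) u = g)"

definition left_disjoint :: "('o, 'm) cat \<Rightarrow> 'm \<Rightarrow> 'm \<Rightarrow> bool" where
  "left_disjoint C f g \<longleftrightarrow>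
     (\<forall>h\<in>mor C. \<forall>h'\<in>mor C. tgt C h' = src C f \<longrightarrow>
        left_div C h (comp C h' f) \<longrightarrow> left_div C h (comp C h' g) \<longrightarrow> left_div C h h')"

text \<open>\<open>\<overline>u | v\<close> is symmetric S-normal (u, v paths from the common source x).\<close>
definition sym_normal :: "('o, 'm) cat \<Rightarrow> 'm set \<Rightarrow> 'o \<Rightarrow> 'm list \<Rightarrow> 'm list \<Rightarrow> bool" where
  "sym_normal C S x u v \<longleftrightarrow> is_path C x u \<and> is_path C x v \<and>
     normal_path C S u \<and> normal_path C S v \<and>
     (u \<noteq> [] \<and> v \<noteq> [] \<longrightarrow> left_disjoint C (hd u) (hd v))"

definition bowtie :: "('o, 'm) cat \<Rightarrow> 'm \<times> 'm \<Rightarrow> 'm \<times> 'm \<Rightarrow> bool" where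
  "bowtie C p q \<longleftrightarrow> (case p of (f, g) \<Rightarrow> case q of (f', g') \<Rightarrow>
     (\<exists>h\<in>mor C. \<exists>h'\<in>mor C. tgt C h = src C f \<and> tgt C h' = src C f' \<and>
        comp C h f = comp C h' f' \<and> comp C h g = comp C h' g'))"

definition weak_left_lcm :: "('o, 'm) cat \<Rightarrow> 'm \<Rightarrow> 'm \<Rightarrow> 'm \<Rightarrow> bool" where
  "weak_left_lcm C h f g \<longleftrightarrow> left_mult C h f \<and> left_mult C h g \<and>
     (\<forall>h1. left_mult C h1 f \<longrightarrow> left_mult C h1 g \<longrightarrow>
        (\<exists>k. left_mult C k h1 \<and> left_mult C k h) \<longrightarrow> left_mult C h1 h)"

definition cond_weak_left_lcms :: "('o, 'm) cat \<Rightarrow> bool" where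
  "cond_weak_left_lcms C \<longleftrightarrow>
     (\<forall>f\<in>mor C. \<forall>g\<in>mor C. \<forall>h0. tgt C f = tgt C g \<longrightarrow>
        left_mult C h0 f \<longrightarrow> left_mult C h0 g \<longrightarrow>
        (\<exists>h. weak_left_lcm C h f g \<and> left_mult C h0 h))"

definition common_right_mult :: "('o, 'm) cat \<Rightarrow> 'm \<Rightarrow> 'm \<Rightarrow> bool" where
  "common_right_mult C f g \<longleftrightarrow> (\<exists>h. left_div C f h \<and> left_div C g h)"

end

theory Submission
  imports Defs
begin

text \<open>
  Write \<open>[u]\<close> for the evaluation of a path. If \<open>\<overline>u | v\<close> is symmetric S-normal, then
  \<open>[u]\<close> and \<open>[v]\<close> are left-disjoint: by greediness an element of \<open>S\<^sup>\<sharp>\<close> that left-divides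
  \<open>h'[u]\<close> already left-divides \<open>h'\<close> times the first entry of \<open>u\<close>; as S is a Garside family,
  every element is a product of elements of \<open>S\<^sup>\<sharp>\<close>, so disjointness of the first entries
  passes to \<open>[u]\<close> and \<open>[v]\<close>. Conversely, left-disjointness passes to left divisors, so the
  normal decompositions of a left-disjoint pair form a symmetric S-normal path.

  Left-disjoint pairs link the two conditions. If \<open>(a, b)\<close> is left-disjoint and \<open>a f = b g\<close>,
  then \<open>a f\<close> is a weak left-lcm of \<open>f\<close> and \<open>g\<close>, and \<open>(k\<^sub>1, k\<^sub>2) \<bowtie> (a, b)\<close> forces
  \<open>(k\<^sub>1, k\<^sub>2) = (z a, z b)\<close>. Conversely, if \<open>c = f' a = g' b\<close> is a weak left-lcm of \<open>a\<close> and
  \<open>b\<close>, then \<open>(f', g')\<close> is left-disjoint.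
\<close>

locale cancellative_category =
  fixes C :: "('o, 'm) cat"
  assumes category: "category C" and cancellative: "cancellative C"
begin

abbreviation comp_infix (infixl "\<odot>" 70) where "f \<odot> g \<equiv> comp C f g"

lemma comp_mor [simp]: "f \<in> mor C \<Longrightarrow> g \<in> mor C \<Longrightarrow> tgt C f = src C g \<Longrightarrow> f \<odot> g \<in> mor C"
  and src_comp [simp]: "f \<in> mor C \<Longrightarrow> g \<in> mor C \<Longrightarrow> tgt C f = src C g \<Longrightarrow> src C (f \<odot> g) = src C f"
  and tgt_comp [simp]: "f \<in> mor C \<Longrightarrow> g \<in> mor C \<Longrightarrow> tgt C f = src C g \<Longrightarrow> tgt C (f \<odot> g) = tgt C g"
  using category unfolding category_def by blast+

lemma comp_assoc [simp]:
  "\<lbrakk>f \<in> mor C; g \<in> mor C; h \<in> mor C; tgt C f = src C g; tgt C g = src C h\<rbrakk>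
   \<Longrightarrow> f \<odot> g \<odot> h = f \<odot> (g \<odot> h)"
  using category unfolding category_def by blast

lemma comp_eq_comp_right:
  assumes "f \<odot> g = f' \<odot> g'" "f \<in> mor C" "g \<in> mor C" "f' \<in> mor C" "g' \<in> mor C" "h \<in> mor C"
    "tgt C f = src C g" "tgt C f' = src C g'" "tgt C g = src C h"
  shows "f \<odot> (g \<odot> h) = f' \<odot> (g' \<odot> h)"
proof -
  have "tgt C g' = tgt C g"
    using tgt_comp[of f g] tgt_comp[of f' g'] assms by simp
  then show ?thesis
    using comp_assoc[of f g h] comp_assoc[of f' g' h] assms by simp
qed

lemma src_obj [simp]: "f \<in> mor C \<Longrightarrow> src C f \<in> obj C"
  and tgt_obj [simp]: "f \<in> mor C \<Longrightarrow> tgt C f \<in> obj C"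
  using category unfolding category_def by blast+

lemma idm_mor [simp]: "x \<in> obj C \<Longrightarrow> idm C x \<in> mor C"
  and src_idm [simp]: "x \<in> obj C \<Longrightarrow> src C (idm C x) = x"
  and tgt_idm [simp]: "x \<in> obj C \<Longrightarrow> tgt C (idm C x) = x"
  using category unfolding category_def by blast+

lemma comp_idm_left [simp]: "f \<in> mor C \<Longrightarrow> src C f = x \<Longrightarrow> idm C x \<odot> f = f"
  and comp_idm_right [simp]: "f \<in> mor C \<Longrightarrow> tgt C f = x \<Longrightarrow> f \<odot> idm C x = f"
  using category unfolding category_def by blast+

lemma comp_cancel_left:
  "\<lbrakk>f \<odot> g = f \<odot> g'; f \<in> mor C; g \<in> mor C; g' \<in> mor C; tgt C f = src C g; tgt C f = src C g'\<rbrakk>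
   \<Longrightarrow> g = g'"
  using cancellative unfolding cancellative_def by blast

lemma comp_cancel_right:
  "\<lbrakk>g \<odot> f = g' \<odot> f; f \<in> mor C; g \<in> mor C; g' \<in> mor C; tgt C g = src C f; tgt C g' = src C f\<rbrakk>
   \<Longrightarrow> g = g'"
  using cancellative unfolding cancellative_def by blast

lemma left_divE:
  assumes "left_div C s X"
  obtains g where "s \<in> mor C" "g \<in> mor C" "src C g = tgt C s" "X = s \<odot> g"
  using assms unfolding left_div_def by blast

lemma left_divI:
  "\<lbrakk>X = s \<odot> g; s \<in> mor C; g \<in> mor C; tgt C s = src C g\<rbrakk> \<Longrightarrow> left_div C s X"
  unfolding left_div_def by auto

lemma left_multE:
  assumes "left_mult C h f"
  obtains k where "f \<in> mor C" "k \<in> mor C" "tgt C k = src C f" "h = k \<odot> f"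
  using assms unfolding left_mult_def by blast

lemma left_multI:
  "\<lbrakk>h = k \<odot> f; f \<in> mor C; k \<in> mor C; tgt C k = src C f\<rbrakk> \<Longrightarrow> left_mult C h f"
  unfolding left_mult_def by auto

lemma src_left_div: "left_div C s X \<Longrightarrow> src C X = src C s"
  by (auto elim!: left_divE)

lemma left_div_trans:
  assumes "left_div C r s" "left_div C s X"
  shows "left_div C r X"
proof -
  obtain a b where "r \<in> mor C" "a \<in> mor C" "src C a = tgt C r" "s = r \<odot> a"
    "b \<in> mor C" "src C b = tgt C s" "X = s \<odot> b"
    using assms by (elim left_divE)
  then show ?thesis by (intro left_divI[of X r "a \<odot> b"]) auto
qed

lemma left_div_comp_left:
  assumes "left_div C s X" "h \<in> mor C" "tgt C h = src C s"
  shows "left_div C (h \<odot> s) (h \<odot> X)"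
proof -
  obtain a where "s \<in> mor C" "a \<in> mor C" "src C a = tgt C s" "X = s \<odot> a"
    using assms by (elim left_divE)
  then show ?thesis using assms(2,3) by (intro left_divI[of _ _ a]) auto
qed

lemma left_div_cancel_left:
  assumes "left_div C (r \<odot> W) (r \<odot> X)" "r \<in> mor C" "W \<in> mor C" "X \<in> mor C"
    "tgt C r = src C W" "tgt C r = src C X"
  shows "left_div C W X"
proof -
  obtain g where g: "g \<in> mor C" "src C g = tgt C W" "r \<odot> X = r \<odot> W \<odot> g"
    using assms(1,2,3,5) by (elim left_divE) simp
  then have "X = W \<odot> g"
    using assms by (rule_tac comp_cancel_left[of r]) auto
  then show ?thesis using g assms by (intro left_divI[of _ _ g]) auto
qed

lemma invertible_left_div:
  assumes "e \<in> invertibles C" "X \<in> mor C" "src C X = src C e"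
  shows "left_div C e X"
proof -
  obtain e' where e: "e \<in> mor C" "e' \<in> mor C" "src C e' = tgt C e" "tgt C e' = src C e"
    "e \<odot> e' = idm C (src C e)" using assms(1) unfolding invertibles_def by blast
  have "X = idm C (src C e) \<odot> X"
    using assms by simp
  also have "\<dots> = e \<odot> e' \<odot> X"
    by (simp only: e(5))
  also have "\<dots> = e \<odot> (e' \<odot> X)"
    using e assms by (rule_tac comp_assoc) auto
  finally show ?thesis using e assms by (intro left_divI[of _ _ "e' \<odot> X"]) auto
qed

lemma invertibles_mor [simp]: "e \<in> invertibles C \<Longrightarrow> e \<in> mor C"
  unfolding invertibles_def by blast

lemma left_div_comp_invertible:
  assumes "left_div C s X" "e \<in> invertibles C" "tgt C s = src C e"
  shows "left_div C (s \<odot> e) X"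
proof -
  obtain g where g: "s \<in> mor C" "g \<in> mor C" "src C g = tgt C s" "X = s \<odot> g"
    using assms(1) by (elim left_divE)
  then have "left_div C e g"
    using assms by (intro invertible_left_div) auto
  then show ?thesis
    using g assms left_div_comp_left by simp
qed

lemma path_prod_closed: "is_path C x u \<Longrightarrow> path_prod C x u \<in> mor C \<and> src C (path_prod C x u) = x"
  by (induction u arbitrary: x) auto

lemmas path_prod_mor [simp] = path_prod_closed[THEN conjunct1]
   and src_path_prod [simp] = path_prod_closed[THEN conjunct2]

lemma hd_path:
  assumes "is_path C x u" "u \<noteq> []"
  shows "hd u \<in> mor C" "src C (hd u) = x"
  using assms by (cases u; simp)+

lemma hd_left_div_path_prod:
  assumes "is_path C x u" "u \<noteq> []"
  shows "left_div C (hd u) (path_prod C x u)"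
  using assms by (cases u) (auto intro: left_divI)

lemma greedy_path_ConsD:
  assumes "greedy_path C S (a # b # u)"
  shows "greedy2 C S a b" "greedy_path C S (b # u)"
  using assms unfolding greedy_path_def by (metis Suc_less_eq length_Cons nth_Cons_0 nth_Cons_Suc zero_less_Suc)+

lemma greedy_path_left_div_hd:
  assumes "is_path C x u" "greedy_path C S u" "u \<noteq> []" "s \<in> S" "f \<in> mor C" "tgt C f = x"
    "left_div C s (f \<odot> path_prod C x u)"
  shows "left_div C s (f \<odot> hd u)"
  using assms
proof (induction u arbitrary: x f)
  case Nil
  then show ?case by simp
next
  case (Cons a u)
  show ?case
  proof (cases u)
    case Nil
    then show ?thesis using Cons.prems by simp
  next
    case (Cons b w)
    have a: "a \<in> mor C" "src C a = x" "is_path C (tgt C a) u"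
      using Cons.prems(1) by auto
    have "left_div C s (f \<odot> a \<odot> path_prod C (tgt C a) u)"
      using Cons.prems a by simp
    then have "left_div C s (f \<odot> a \<odot> b)"
      using Cons.IH[of "tgt C a" "f \<odot> a"] Cons.prems a \<open>u = b # w\<close>
        greedy_path_ConsD(2)[of S a b w] by simp
    moreover have "greedy2 C S a b"
      using Cons.prems(2) \<open>u = b # w\<close> by (simp add: greedy_path_ConsD(1))
    ultimately show ?thesis
      unfolding greedy2_def using Cons.prems a by simp
  qed
qed

lemma sharp_left_div_hd:
  assumes "S \<subseteq> mor C" "r \<in> sharp C S" "is_path C x u" "greedy_path C S u" "u \<noteq> []"
    "f \<in> mor C" "tgt C f = x" "left_div C r (f \<odot> path_prod C x u)"
  shows "left_div C r (f \<odot> hd u)"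
proof -
  have hd: "hd u \<in> mor C" "src C (hd u) = x"
    using hd_path assms(3,5) by simp_all
  from assms(2) consider (regular) s e where "s \<in> S" "e \<in> invertibles C" "tgt C s = src C e" "r = s \<odot> e"
    | (invertible) "r \<in> invertibles C"
    unfolding sharp_def by blast
  then show ?thesis
  proof cases
    case regular
    then have "left_div C s r"
      using assms(1) by (intro left_divI[of _ _ e]) auto
    then have "left_div C s (f \<odot> path_prod C x u)"
      using assms(8) left_div_trans by blast
    then have "left_div C s (f \<odot> hd u)"
      using greedy_path_left_div_hd regular assms by blast
    then show ?thesis
      using left_div_comp_invertible regular by simp
  next
    case invertible
    have "src C r = src C f"
      using src_left_div[OF assms(8)] assms by simp
    then show ?thesis
      using invertible_left_div[OF invertible] assms hd by simp
  qed
qed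

text \<open>The admissible
  \<open>h\<close> are closed under products, so for \<open>([u], [v])\<close> it suffices to test elements of
  \<open>S\<^sup>\<sharp>\<close>.\<close>

definition left_disjoint_wrt :: "'m \<Rightarrow> 'm \<Rightarrow> 'm \<Rightarrow> bool" where
  "left_disjoint_wrt h a b \<longleftrightarrow>
     (\<forall>h'\<in>mor C. tgt C h' = src C a \<longrightarrow>
        left_div C h (h' \<odot> a) \<longrightarrow> left_div C h (h' \<odot> b) \<longrightarrow> left_div C h h')"

lemma left_disjoint_iff_wrt: "left_disjoint C a b \<longleftrightarrow> (\<forall>h\<in>mor C. left_disjoint_wrt h a b)"
  unfolding left_disjoint_def left_disjoint_wrt_def by blast

lemma left_disjoint_wrt_idm:
  assumes "a \<in> mor C" "y \<in> obj C"
  shows "left_disjoint_wrt (idm C y) a b"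
  unfolding left_disjoint_wrt_def
proof (intro ballI impI)
  fix h' assume h': "h' \<in> mor C" "tgt C h' = src C a" "left_div C (idm C y) (h' \<odot> a)"
  then have "src C h' = y"
    using src_left_div[OF h'(3)] assms by simp
  then show "left_div C (idm C y) h'"
    using h' assms by (intro left_divI[of _ _ h']) auto
qed

lemma left_disjoint_wrt_comp:
  assumes r: "r \<in> mor C" "left_disjoint_wrt r a b"
    and W: "W \<in> mor C" "left_disjoint_wrt W a b" "tgt C r = src C W"
    and ab: "a \<in> mor C" "b \<in> mor C" "src C a = src C b"
  shows "left_disjoint_wrt (r \<odot> W) a b"
  unfolding left_disjoint_wrt_def
proof (intro ballI impI)
  fix h' assume h': "h' \<in> mor C" "tgt C h' = src C a"
    and div_a: "left_div C (r \<odot> W) (h' \<odot> a)" and div_b: "left_div C (r \<odot> W) (h' \<odot> b)"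
  have "left_div C r (r \<odot> W)"
    using r W by (intro left_divI[of _ _ W]) auto
  then have "left_div C r h'"
    using r(2) h' div_a div_b left_div_trans unfolding left_disjoint_wrt_def by blast
  then obtain h'' where h'': "h'' \<in> mor C" "src C h'' = tgt C r" "h' = r \<odot> h''"
    by (elim left_divE)
  have "left_div C W (h'' \<odot> a)" "left_div C W (h'' \<odot> b)"
    using div_a div_b h'' h' r W ab
    by (auto intro!: left_div_cancel_left[of r])
  then have "left_div C W h''"
    using W(2) h'' h' r unfolding left_disjoint_wrt_def by simp
  then show "left_div C (r \<odot> W) h'"
    using left_div_comp_left h'' r W by simp
qed

lemma left_disjoint_wrt_path_prod:
  assumes "is_path C y w" "\<forall>r\<in>set w. left_disjoint_wrt r a b"
    and "a \<in> mor C" "b \<in> mor C" "src C a = src C b"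
  shows "left_disjoint_wrt (path_prod C y w) a b"
  using assms(1,2)
proof (induction w arbitrary: y)
  case Nil
  then show ?case using left_disjoint_wrt_idm assms by simp
next
  case (Cons r w)
  then show ?case using left_disjoint_wrt_comp assms by simp
qed

lemma sharp_mor: "S \<subseteq> mor C \<Longrightarrow> sharp C S \<subseteq> mor C"
  unfolding sharp_def by auto

lemma sharp_left_disjoint_wrt_path_prod:
  assumes "S \<subseteq> mor C" "r \<in> sharp C S"
    and u: "is_path C x u" "greedy_path C S u" "u \<noteq> []"
    and v: "is_path C x v" "greedy_path C S v" "v \<noteq> []"
    and "left_disjoint C (hd u) (hd v)"
  shows "left_disjoint_wrt r (path_prod C x u) (path_prod C x v)"
  unfolding left_disjoint_wrt_def
proof (intro ballI impI)
  fix h' assume h': "h' \<in> mor C" "tgt C h' = src C (path_prod C x u)"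
    "left_div C r (h' \<odot> path_prod C x u)" "left_div C r (h' \<odot> path_prod C x v)"
  have "left_div C r (h' \<odot> hd u)" "left_div C r (h' \<odot> hd v)"
    using sharp_left_div_hd assms h' by simp_all
  moreover have "r \<in> mor C" "tgt C h' = src C (hd u)"
    using h' u hd_path sharp_mor[OF assms(1)] assms(2) by auto
  ultimately show "left_div C r h'"
    using assms(9) h' unfolding left_disjoint_def by blast
qed

lemma sym_normal_left_disjoint:
  assumes "garside_family C S" "sym_normal C S x u v"
  shows "left_disjoint C (path_prod C x u) (path_prod C x v)"
proof (cases "u = [] \<or> v = []")
  case True
  have paths: "is_path C x u" "is_path C x v"
    using assms(2) unfolding sym_normal_def by auto
  show ?thesis
    unfolding left_disjoint_def
  proof (intro ballI impI)
    fix h h' assume "h \<in> mor C" "h' \<in> mor C" "tgt C h' = src C (path_prod C x u)"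
      "left_div C h (h' \<odot> path_prod C x u)" "left_div C h (h' \<odot> path_prod C x v)"
    moreover have "path_prod C x u = idm C x \<or> path_prod C x v = idm C x"
      using True by auto
    ultimately show "left_div C h h'"
      using paths by auto
  qed
next
  case False
  have S: "S \<subseteq> mor C"
    using assms(1) unfolding garside_family_def by blast
  have u: "is_path C x u" "greedy_path C S u" and v: "is_path C x v" "greedy_path C S v"
    and hd: "left_disjoint C (hd u) (hd v)"
    using assms(2) False unfolding sym_normal_def normal_path_def by auto
  have "left_disjoint_wrt h (path_prod C x u) (path_prod C x v)" if "h \<in> mor C" for h
  proof -
    obtain w where w: "is_path C (src C h) w" "set w \<subseteq> sharp C S" "path_prod C (src C h) w = h"
      using assms(1) \<open>h \<in> mor C\<close> unfolding garside_family_def normal_path_def by blast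
    have "\<forall>r\<in>set w. left_disjoint_wrt r (path_prod C x u) (path_prod C x v)"
      using sharp_left_disjoint_wrt_path_prod[OF S _ u _ v _ hd] w(2) False by blast
    then show ?thesis
      using left_disjoint_wrt_path_prod[OF w(1)] u v w(3) by simp
  qed
  then show ?thesis
    unfolding left_disjoint_iff_wrt by blast
qed

lemma left_disjoint_left_div:
  assumes "left_disjoint C f g" "left_div C f0 f" "left_div C g0 g" "src C f = src C g"
  shows "left_disjoint C f0 g0"
  unfolding left_disjoint_def
proof (intro ballI impI)
  fix h h' assume h: "h \<in> mor C" "h' \<in> mor C" "tgt C h' = src C f0"
    "left_div C h (h' \<odot> f0)" "left_div C h (h' \<odot> g0)"
  have "tgt C h' = src C f" "tgt C h' = src C g"
    using h(3) src_left_div[OF assms(2)] src_left_div[OF assms(3)] assms(4) by simp_all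
  then have "left_div C h (h' \<odot> f)" "left_div C h (h' \<odot> g)"
    using h left_div_comp_left[OF assms(2)] left_div_comp_left[OF assms(3)]
      src_left_div[OF assms(2)] src_left_div[OF assms(3)] left_div_trans by metis+
  then show "left_div C h h'"
    using assms(1) h \<open>tgt C h' = src C f\<close> unfolding left_disjoint_def by blast
qed

lemma bowtie_left_disjoint_factor:
  assumes "bowtie C (k1, k2) (a, b)" "left_disjoint C a b"
    and "a \<in> mor C" "b \<in> mor C" "k1 \<in> mor C" "k2 \<in> mor C"
    and "src C a = src C b" "src C k1 = src C k2"
  obtains z where "z \<in> mor C" "tgt C z = src C a" "k1 = z \<odot> a" "k2 = z \<odot> b"
proof -
  obtain h h' where h: "h \<in> mor C" "h' \<in> mor C" "tgt C h = src C k1" "tgt C h' = src C a"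
    "h \<odot> k1 = h' \<odot> a" "h \<odot> k2 = h' \<odot> b"
    using assms(1) unfolding bowtie_def by auto
  have "left_div C h (h' \<odot> a)" "left_div C h (h' \<odot> b)"
    using h assms by (metis left_divI)+
  then have "left_div C h h'"
    using assms(2) h unfolding left_disjoint_def by blast
  then obtain z where z: "z \<in> mor C" "src C z = tgt C h" "h' = h \<odot> z"
    by (elim left_divE)
  then have tz: "tgt C z = src C a"
    using h assms by simp
  have "k1 = z \<odot> a"
    using h assms z tz by (rule_tac comp_cancel_left[of h]) auto
  moreover have "k2 = z \<odot> b"
    using h assms z tz by (rule_tac comp_cancel_left[of h]) auto
  ultimately show ?thesis
    using that z tz by blast
qed

lemma left_disjoint_weak_left_lcm:
  assumes disj: "left_disjoint C a b" "src C a = src C b"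
    and mor: "a \<in> mor C" "b \<in> mor C" "f \<in> mor C" "g \<in> mor C"
    and "tgt C a = src C f" "tgt C b = src C g" "a \<odot> f = b \<odot> g"
  shows "weak_left_lcm C (a \<odot> f) f g"
  unfolding weak_left_lcm_def
proof (intro conjI allI impI)
  show "left_mult C (a \<odot> f) f" "left_mult C (a \<odot> f) g"
    using assms by (metis left_multI)+
next
  fix h1 assume "left_mult C h1 f" "left_mult C h1 g"
    and "\<exists>k. left_mult C k h1 \<and> left_mult C k (a \<odot> f)"
  then obtain p q k r s where
    p: "p \<in> mor C" "tgt C p = src C f" "h1 = p \<odot> f" and
    q: "q \<in> mor C" "tgt C q = src C g" "h1 = q \<odot> g" and
    r: "r \<in> mor C" "tgt C r = src C h1" "k = r \<odot> h1" and
    s: "s \<in> mor C" "tgt C s = src C (a \<odot> f)" "k = s \<odot> (a \<odot> f)"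
    by (elim exE conjE left_multE) blast
  have k: "r \<odot> h1 = s \<odot> (a \<odot> f)"
    using r s by simp
  have "r \<odot> p \<odot> f = s \<odot> a \<odot> f"
    using k p r s mor assms by simp
  then have rp: "r \<odot> p = s \<odot> a"
    by (rule comp_cancel_right) (use p r s mor assms in simp_all)
  have "r \<odot> q \<odot> g = r \<odot> h1"
    using q r mor by simp
  also have "\<dots> = s \<odot> b \<odot> g"
    using k s mor assms by simp
  finally have rq: "r \<odot> q = s \<odot> b"
    by (rule comp_cancel_right) (use q r s mor assms in simp_all)
  have "src C h1 = src C p"
    using p mor by simp
  moreover have "src C h1 = src C q"
    using q mor by simp
  moreover have "bowtie C (p, q) (a, b)"
    unfolding bowtie_def prod.case
    by (rule bexI[of _ r], rule bexI[of _ s]) (use rp rq p r s mor assms in auto)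
  ultimately obtain w where "w \<in> mor C" "tgt C w = src C a" "p = w \<odot> a"
    using p q disj mor by (elim bowtie_left_disjoint_factor) auto
  then show "left_mult C h1 (a \<odot> f)"
    using p mor assms by (intro left_multI[of _ w]) auto
qed

lemma weak_left_lcm_left_disjoint:
  assumes lcm: "weak_left_lcm C c a b"
    and f': "f' \<in> mor C" "tgt C f' = src C a" "c = f' \<odot> a"
    and g': "g' \<in> mor C" "tgt C g' = src C b" "c = g' \<odot> b"
  shows "left_disjoint C f' g'"
  unfolding left_disjoint_def
proof (intro ballI impI)
  have ab: "a \<in> mor C" "b \<in> mor C"
    using lcm unfolding weak_left_lcm_def left_mult_def by blast+
  have "src C c = src C f'"
    unfolding f'(3) using f'(1,2) ab by simp
  moreover have "src C c = src C g'"
    unfolding g'(3) using g'(1,2) ab by simp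
  ultimately have src_c: "src C c = src C f'" "src C c = src C g'" .
  fix h h' assume h: "h \<in> mor C" "h' \<in> mor C" "tgt C h' = src C f'"
    "left_div C h (h' \<odot> f')" "left_div C h (h' \<odot> g')"
  obtain x where x: "x \<in> mor C" "src C x = tgt C h" "h' \<odot> f' = h \<odot> x"
    using h(4) by (elim left_divE)
  obtain y where y: "y \<in> mor C" "src C y = tgt C h" "h' \<odot> g' = h \<odot> y"
    using h(5) by (elim left_divE)
  have tx: "tgt C x = src C a"
    using tgt_comp[of h' f'] tgt_comp[of h x] x h f' by simp
  have ty: "tgt C y = src C b"
    using tgt_comp[of h' g'] tgt_comp[of h y] y h g' src_c by simp
  have hxa: "h \<odot> (x \<odot> a) = h' \<odot> c"
    using comp_eq_comp_right[OF x(3)[symmetric]] x tx h f' ab by simp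
  have "h \<odot> (y \<odot> b) = h' \<odot> c"
    using comp_eq_comp_right[OF y(3)[symmetric]] y ty h g' ab src_c by simp
  with hxa have xy: "x \<odot> a = y \<odot> b"
    by (rule_tac comp_cancel_left[of h]) (use x y tx ty h ab in simp_all)
  have "left_mult C (h' \<odot> c) (x \<odot> a)"
    using hxa x tx h ab by (intro left_multI[of _ h]) auto
  moreover have "left_mult C (h' \<odot> c) c"
    using h f' ab src_c by (intro left_multI[of _ h']) auto
  moreover have "left_mult C (x \<odot> a) a"
    using x tx ab by (intro left_multI[of _ x]) auto
  moreover have "left_mult C (x \<odot> a) b"
    using xy y ty ab by (intro left_multI[of _ y]) auto
  ultimately have "left_mult C (x \<odot> a) c"
    using lcm unfolding weak_left_lcm_def by blast
  then obtain z where z: "z \<in> mor C" "tgt C z = src C f'" "x \<odot> a = z \<odot> f' \<odot> a"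
    using f' ab src_c by (elim left_multE) simp
  have "x = z \<odot> f'"
    by (rule comp_cancel_right[OF z(3)]) (use x z tx f' ab in simp_all)
  then have "h' \<odot> f' = h \<odot> z \<odot> f'"
    using x z h f' by simp
  then have "h' = h \<odot> z"
    by (rule comp_cancel_right) (use x z h f' \<open>x = z \<odot> f'\<close> in simp_all)
  then show "left_div C h h'"
    using x z h \<open>x = z \<odot> f'\<close> f' by (intro left_divI[of _ _ z]) auto
qed

lemma bowtie_comp_left:
  assumes "d \<in> mor C" "f \<in> mor C" "g \<in> mor C" "tgt C d = src C f" "tgt C d = src C g"
  shows "bowtie C (d \<odot> f, d \<odot> g) (f, g)"
  unfolding bowtie_def prod.case
  by (rule bexI[of _ "idm C (src C d)"], rule bexI[of _ d]) (use assms in auto)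

lemma cond_weak_left_lcms_if_sym_normal_bowtie:
  assumes garside: "garside_family C S"
    and sym: "\<forall>f\<in>mor C. \<forall>g\<in>mor C. common_right_mult C f g \<longrightarrow>
            (\<exists>x u v. sym_normal C S x u v \<and> bowtie C (f, g) (path_prod C x u, path_prod C x v))"
  shows "cond_weak_left_lcms C"
  unfolding cond_weak_left_lcms_def
proof (intro ballI allI impI)
  fix f g h0 assume f: "f \<in> mor C" and g: "g \<in> mor C" and "tgt C f = tgt C g"
    and "left_mult C h0 f" "left_mult C h0 g"
  then obtain k1 k2 where k1: "k1 \<in> mor C" "tgt C k1 = src C f" "h0 = k1 \<odot> f"
    and k2: "k2 \<in> mor C" "tgt C k2 = src C g" "h0 = k2 \<odot> g"
    by (elim left_multE) blast
  have "common_right_mult C k1 k2"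
    unfolding common_right_mult_def using f g k1 k2 by (metis left_divI)
  then obtain x u v where sn: "sym_normal C S x u v"
    and "bowtie C (k1, k2) (path_prod C x u, path_prod C x v)"
    using sym k1 k2 by blast
  moreover define a b where "a = path_prod C x u" and "b = path_prod C x v"
  ultimately have bowtie: "bowtie C (k1, k2) (a, b)"
    by simp
  have ab: "a \<in> mor C" "b \<in> mor C" "src C a = x" "src C b = x"
    using sn unfolding sym_normal_def a_def b_def by simp_all
  have disj: "left_disjoint C a b"
    using sym_normal_left_disjoint[OF garside sn] unfolding a_def b_def .
  have "src C k1 = src C h0"
    using k1 f by simp
  moreover have "src C k2 = src C h0"
    using k2 g by simp
  ultimately obtain z where z: "z \<in> mor C" "tgt C z = src C a" "k1 = z \<odot> a" "k2 = z \<odot> b"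
    using bowtie_left_disjoint_factor[OF bowtie disj] ab k1 k2 by metis
  have tgt_ab: "tgt C a = src C f" "tgt C b = src C g"
    using z k1 k2 ab by simp_all
  have "z \<odot> (a \<odot> f) = z \<odot> (b \<odot> g)"
    using z ab tgt_ab f g k1 k2 by simp
  then have af: "a \<odot> f = b \<odot> g"
    by (rule comp_cancel_left) (use z ab tgt_ab f g in simp_all)
  have "weak_left_lcm C (a \<odot> f) f g"
    using left_disjoint_weak_left_lcm[OF disj] ab tgt_ab f g af by simp
  moreover have "left_mult C h0 (a \<odot> f)"
    using z ab tgt_ab f k1 by (intro left_multI[of _ z]) auto
  ultimately show "\<exists>h. weak_left_lcm C h f g \<and> left_mult C h0 h"
    by blast
qed

lemma left_disjoint_sym_normal:
  assumes garside: "garside_family C S" and disj: "left_disjoint C f g"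
    and "f \<in> mor C" "g \<in> mor C" "src C f = src C g"
  obtains u v where "sym_normal C S (src C f) u v"
    "path_prod C (src C f) u = f" "path_prod C (src C f) v = g"
proof -
  obtain u where u: "is_path C (src C f) u" "normal_path C S u" "path_prod C (src C f) u = f"
    using garside assms(3) unfolding garside_family_def by blast
  obtain v where v: "is_path C (src C f) v" "normal_path C S v" "path_prod C (src C f) v = g"
    using garside assms(4,5) unfolding garside_family_def by metis
  have "left_disjoint C (hd u) (hd v)" if "u \<noteq> []" "v \<noteq> []"
    using left_disjoint_left_div[OF disj] hd_left_div_path_prod u v that assms(5) by metis
  then have "sym_normal C S (src C f) u v"
    unfolding sym_normal_def using u v by blast
  then show ?thesis
    using that u v by blast
qed

lemma sym_normal_bowtie_if_cond_weak_left_lcms: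
  assumes garside: "garside_family C S" and lcms: "cond_weak_left_lcms C"
  shows "\<forall>f\<in>mor C. \<forall>g\<in>mor C. common_right_mult C f g \<longrightarrow>
            (\<exists>x u v. sym_normal C S x u v \<and> bowtie C (f, g) (path_prod C x u, path_prod C x v))"
proof (intro ballI impI)
  fix f g assume f: "f \<in> mor C" and g: "g \<in> mor C" and "common_right_mult C f g"
  then obtain m a b where a: "a \<in> mor C" "src C a = tgt C f" "m = f \<odot> a"
    and b: "b \<in> mor C" "src C b = tgt C g" "m = g \<odot> b"
    unfolding common_right_mult_def by (elim exE conjE left_divE) blast
  have "tgt C a = tgt C m" "left_mult C m a"
    using a f by (auto intro: left_multI[of _ f])
  moreover have "tgt C b = tgt C m" "left_mult C m b"
    using b g by (auto intro: left_multI[of _ g])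
  ultimately obtain c where lcm: "weak_left_lcm C c a b" and "left_mult C m c"
    using lcms a b unfolding cond_weak_left_lcms_def by metis
  then obtain f' g' d where f': "f' \<in> mor C" "tgt C f' = src C a" "c = f' \<odot> a"
    and g': "g' \<in> mor C" "tgt C g' = src C b" "c = g' \<odot> b"
    and d: "c \<in> mor C" "d \<in> mor C" "tgt C d = src C c" "m = d \<odot> c"
    unfolding weak_left_lcm_def by (elim conjE left_multE) blast
  have src_c: "src C c = src C f'" "src C c = src C g'"
    using f' g' a b by (metis src_comp)+
  have "f \<odot> a = d \<odot> f' \<odot> a"
    using a d f' src_c by simp
  then have f_eq: "f = d \<odot> f'"
    by (rule comp_cancel_right) (use a d f f' src_c in simp_all)
  have "g \<odot> b = d \<odot> g' \<odot> b"
    using b d g' src_c by simp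
  then have g_eq: "g = d \<odot> g'"
    by (rule comp_cancel_right) (use b d g g' src_c in simp_all)
  obtain u v where "sym_normal C S (src C f') u v"
    and u: "path_prod C (src C f') u = f'" and v: "path_prod C (src C f') v = g'"
    using left_disjoint_sym_normal[OF garside weak_left_lcm_left_disjoint[OF lcm f' g']] f' g' src_c
    by metis
  moreover have "bowtie C (f, g) (path_prod C (src C f') u, path_prod C (src C f') v)"
    using bowtie_comp_left[of d f' g'] f_eq g_eq u v d f' g' src_c by simp
  ultimately show "\<exists>x u v. sym_normal C S x u v \<and> bowtie C (f, g) (path_prod C x u, path_prod C x v)"
    by blast
qed

end

theorem mainTheorem4:
  fixes C :: "('o, 'm) cat" and S :: "'m set"
  assumes "category C" and "cancellative C" and "garside_family C S"
  shows "(\<forall>f\<in>mor C. \<forall>g\<in>mor C. common_right_mult C f g \<longrightarrow>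
            (\<exists>x u v. sym_normal C S x u v \<and>
               bowtie C (f, g) (path_prod C x u, path_prod C x v)))
         \<longleftrightarrow> cond_weak_left_lcms C"
proof -
  interpret cancellative_category C
    using assms(1,2) by unfold_locales
  show ?thesis
    using cond_weak_left_lcms_if_sym_normal_bowtie[OF assms(3)]
      sym_normal_bowtie_if_cond_weak_left_lcms[OF assms(3)] by blast
qed

end
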